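(* There exist nonnegative functions $f_n, g_n \in L_1(\mathbb{T})$, $n \in \mathbb{N}$, with $\log f_n, \log g_n \in L_1(\mathbb{T})$ (so that their spectral factors $f_n^+, g_n^+$ are defined), such that $$ \|f_n\|_{L_1}\le 1,\quad \|g_n\|_{L_1} \le 1, \quad \|g_n - f_n\|_{L_1} \le \frac1n, \quad \|\log g_n - \log f_n\|_{L_1} \le \frac1n, $$ but $$ \|g_n^+ - f_n^+\|_{H_2} \ge 2 - \frac1n . $$
   Context: $\mathbb{T}$ is the unit circle, parametrized by $e^{i\vartheta}$, $\vartheta\in[-\pi,\pi)$. Norms are unnormalized: $\|h\|_{L_1}=\int_{-\pi}^{\pi}|h(e^{i\vartheta})|\,d\vartheta$, and for $F$ in the Hardy space $H_2(\mathbb{D})$, $\|F\|_{H_2}^2=\int_{-\pi}^{\pi}|F(e^{i\vartheta})|^2\,d\vartheta$, where $F(e^{i\vartheta})$ denotes the a.e. radial boundary values. For a nonnegative $f\in L_1(\mathbb{T})$ with $\log f\in L_1(\mathbb{T})$, its spectral factor is the outer function $$ f^+(z)=\exp\left(\frac 1{4\pi}\int_0^{2\pi}\frac{e^{i\theta}+z}{e^{i\theta}-z}\log f(e^{i\theta})\,d\theta\right),\quad |z|<1, $$ which belongs to $H_2(\mathbb{D})$, is positive at the origin, and satisfies $|f^+|^2=f$ a.e. on $\mathbb{T}$. *)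

theory Defs
  imports "HOL-Analysis.Analysis"
begin

text \<open>Functions on the unit circle T are modelled as functions on complex numbers,
  evaluated only at points cis t; h(e^{it}) is h (cis t).\<close>

definition L1_T :: "(complex \<Rightarrow> real) \<Rightarrow> bool" where
  "L1_T h \<longleftrightarrow> set_integrable lborel {-pi..pi} (\<lambda>t. h (cis t))"

definition L1_norm :: "(complex \<Rightarrow> real) \<Rightarrow> real" where
  "L1_norm h = (LINT t:{-pi..pi}|lborel. \<bar>h (cis t)\<bar>)"

text \<open>Admissible spectral densities: nonnegative, in L1, with log in L1
  (in particular positive almost everywhere, so log is the genuine logarithm a.e.).\<close>
definition admissible :: "(complex \<Rightarrow> real) \<Rightarrow> bool" where
  "admissible f \<longleftrightarrow> (\<forall>t. 0 \<le> f (cis t)) \<and> L1_T f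
     \<and> (AE t in lborel. t \<in> {-pi..pi} \<longrightarrow> 0 < f (cis t))
     \<and> L1_T (\<lambda>z. ln (f z))"

definition spectral_factor :: "(complex \<Rightarrow> real) \<Rightarrow> complex \<Rightarrow> complex" where
  "spectral_factor f z = exp (complex_of_real (1 / (4 * pi)) *
      (LINT t:{0..2*pi}|lborel. ((cis t + z) / (cis t - z)) * complex_of_real (ln (f (cis t)))))"

definition boundary_value :: "(complex \<Rightarrow> complex) \<Rightarrow> real \<Rightarrow> complex" where
  "boundary_value F t = Lim (at_left 1) (\<lambda>r::real. F (complex_of_real r * cis t))"

definition H2_norm :: "(complex \<Rightarrow> complex) \<Rightarrow> real" where
  "H2_norm F = sqrt (LINT t:{-pi..pi}|lborel. (cmod (boundary_value F t))\<^sup>2)"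

end

theory Submission
  imports Defs "HOL-Complex_Analysis.Complex_Analysis"
begin

text \<open>
  Take \<open>F = c/(1 - \<sigma> z)\<close> with \<open>\<sigma>\<close> very close to \<open>1\<close>, so that \<open>f = |F|\<^sup>2\<close> concentrates
  near \<open>\<theta> = 0\<close>, and \<open>G = F exp (i \<pi> K)\<close> with \<open>K = \<beta> z/(1 - \<rho> z)\<close>, \<open>\<rho> = 1 - \<beta> < \<sigma>\<close>.
  Then \<open>K\<close> is small in \<open>H\<^sub>2\<close>, but \<open>K(1) = 1\<close> and \<open>K \<approx> 1\<close> on the arc where \<open>f\<close> lives.
  Hence \<open>log g - log f = -2\<pi> Im K\<close> is small in \<open>L\<^sub>1\<close>, \<open>g - f = f (exp (-2\<pi> Im K) - 1)\<close>
  is small in \<open>L\<^sub>1\<close> because \<open>Im K = Im (K - 1)\<close>, while \<open>G \<approx> -F\<close> where \<open>f\<close> lives, so that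
  \<open>\<parallel>G - F\<parallel> \<approx> 2 \<parallel>F\<parallel> \<approx> 2\<close>. Since \<open>log F\<close> and \<open>log G\<close> are holomorphic on the closed disc, the
  Schwarz integral formula shows that \<open>F\<close> and \<open>G\<close> are the spectral factors of \<open>f\<close> and \<open>g\<close>.
  All the integrals involved reduce to \<open>\<integral> k\<^sub>a conj k\<^sub>b = 2\<pi>/(1 - a b)\<close> for the Szego kernels
  \<open>k\<^sub>a = 1/(1 - a z)\<close>.
\<close>

lemma has_integral_cis_Cauchy:
  fixes f :: "complex \<Rightarrow> complex"
  assumes "f holomorphic_on cball 0 1" "norm w < 1"
  shows "((\<lambda>t. f (cis t) / (cis t - w) * \<i> * cis t) has_integral (2*pi*\<i>*f w)) {0..2*pi}"
proof -
  have "((\<lambda>u. f u / (u - w)) has_contour_integral (2 * of_real pi * \<i> * f w)) (circlepath 0 1)"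
    using Cauchy_integral_circlepath_simple[OF assms(1)] assms(2) by simp
  hence "((\<lambda>u. f u / (u - w)) has_contour_integral (2 * of_real pi * \<i> * f w))
           (part_circlepath 0 1 0 (2*pi))"
    by (simp add: circlepath_def)
  thus ?thesis
    using has_contour_integral_part_circlepath_iff[of 0 "2*pi"] by simp
qed

lemma has_integral_shift_pi:
  fixes h :: "real \<Rightarrow> 'a::euclidean_space"
  assumes "(h has_integral I) {0..2*pi}"
  shows "((\<lambda>x. h (x + pi)) has_integral I) {-pi..pi}"
proof -
  have "((\<lambda>x. h (1 *\<^sub>R x + pi)) has_integral (I /\<^sub>R 1 ^ DIM(real)))
          (cbox ((0 - pi) /\<^sub>R 1) ((2*pi - pi) /\<^sub>R 1))"
    by (rule has_integral_affinity') (use assms in auto)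
  thus ?thesis by simp
qed

lemma one_minus_mult_neq_0:
  fixes a w :: complex
  assumes "norm a < 1" "norm w \<le> 1"
  shows "1 - a * w \<noteq> 0"
proof -
  have "norm (a * w) < 1"
    using assms mult_left_le[of "norm w" "norm a"] by (simp add: norm_mult)
  thus ?thesis by auto
qed

lemma cnj_cis_eq_inverse: "cnj (cis t) = inverse (cis t)"
  by (simp add: cis_cnj cis_inverse)

definition szego_kernel :: "real \<Rightarrow> complex \<Rightarrow> complex" where
  "szego_kernel a w = 1 / (1 - of_real a * w)"

lemma szego_kernel_holomorphic: "\<bar>a\<bar> < 1 \<Longrightarrow> szego_kernel a holomorphic_on cball 0 1"
  unfolding szego_kernel_def
  by (intro holomorphic_intros) (use one_minus_mult_neq_0[of "of_real a"] in auto)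

lemma cnj_szego_kernel_cis: "\<bar>b\<bar> < 1 \<Longrightarrow> cnj (szego_kernel b (cis t)) = cis t / (cis t - of_real b)"
proof -
  assume "\<bar>b\<bar> < 1"
  then have "cis t - of_real b \<noteq> 0"
    by (metis norm_cis norm_of_real eq_iff_diff_eq_0 less_irrefl)
  then show ?thesis
    by (simp add: szego_kernel_def cnj_cis_eq_inverse divide_simps)
qed

text \<open>Cauchy's formula for \<open>szego_kernel a\<close> at the point \<open>b\<close>.\<close>
lemma szego_kernel_inner_0_2pi:
  assumes "\<bar>a\<bar> < 1" "\<bar>b\<bar> < 1"
  shows "((\<lambda>t. szego_kernel a (cis t) * cnj (szego_kernel b (cis t))) has_integral (2*pi / (1 - a*b)))
           {0..2*pi}"
proof -
  have "((\<lambda>t. szego_kernel a (cis t) / (cis t - of_real b) * \<i> * cis t) has_integral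
          (2 * of_real pi * \<i> * szego_kernel a (of_real b))) {0..2*pi}"
    using has_integral_cis_Cauchy[OF szego_kernel_holomorphic, of a "of_real b"] assms by simp
  from has_integral_mult_left[OF this, of "-\<i>"]
  have "((\<lambda>t. szego_kernel a (cis t) * (cis t / (cis t - of_real b))) has_integral
          2 * of_real pi * szego_kernel a (of_real b)) {0..2*pi}"
    by (simp add: algebra_simps)
  moreover have "szego_kernel a (of_real b) = of_real (1 / (1 - a*b))"
    by (simp add: szego_kernel_def)
  ultimately show ?thesis
    using assms(2) by (simp add: cnj_szego_kernel_cis)
qed

lemma cis_plus_pi: "cis (x + pi) = - cis x"
  by (simp add: cis.ctr complex_eq_iff)

lemma szego_kernel_inner:
  assumes "\<bar>a\<bar> < 1" "\<bar>b\<bar> < 1"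
  shows "((\<lambda>t. szego_kernel a (cis t) * cnj (szego_kernel b (cis t))) has_integral (2*pi / (1 - a*b)))
           {-pi..pi}"
proof -
  have "((\<lambda>t. szego_kernel (-a) (cis t) * cnj (szego_kernel (-b) (cis t))) has_integral
          (2*pi / (1 - (-a)*(-b)))) {0..2*pi}"
    by (rule szego_kernel_inner_0_2pi) (use assms in auto)
  from has_integral_shift_pi[OF this] show ?thesis
    by (simp add: cis_plus_pi szego_kernel_def)
qed

lemma has_integral_norm_square_szego_kernels:
  assumes "\<bar>a\<bar> < 1" "\<bar>b\<bar> < 1"
  shows "((\<lambda>t. (cmod (of_real x * szego_kernel a (cis t) + of_real y * szego_kernel b (cis t)))\<^sup>2)
           has_integral (2*pi * (x\<^sup>2/(1-a\<^sup>2) + y\<^sup>2/(1-b\<^sup>2) + 2*x*y/(1-a*b)))) {-pi..pi}"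
proof -
  let ?k = "\<lambda>a b t. szego_kernel a (cis t) * cnj (szego_kernel b (cis t))"
  have "((\<lambda>t. of_real (x*x) * ?k a a t + of_real (y*y) * ?k b b t
              + (of_real (x*y) * ?k a b t + of_real (x*y) * ?k b a t))
         has_integral (of_real (x*x) * of_real (2*pi/(1-a*a)) + of_real (y*y) * of_real (2*pi/(1-b*b))
              + (of_real (x*y) * of_real (2*pi/(1-a*b)) + of_real (x*y) * of_real (2*pi/(1-b*a)))))
         {-pi..pi}"
    by (intro has_integral_add has_integral_mult_right szego_kernel_inner assms)
  moreover have "of_real (x*x) * ?k a a t + of_real (y*y) * ?k b b t
              + (of_real (x*y) * ?k a b t + of_real (x*y) * ?k b a t)
         = of_real ((cmod (of_real x * szego_kernel a (cis t) + of_real y * szego_kernel b (cis t)))\<^sup>2)"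
    for t
    unfolding complex_norm_square by (simp add: algebra_simps)
  moreover have "of_real (x*x) * of_real (2*pi/(1-a*a)) + of_real (y*y) * of_real (2*pi/(1-b*b))
              + (of_real (x*y) * of_real (2*pi/(1-a*b)) + of_real (x*y) * of_real (2*pi/(1-b*a)))
         = (of_real (2*pi * (x\<^sup>2/(1-a\<^sup>2) + y\<^sup>2/(1-b\<^sup>2) + 2*x*y/(1-a*b))) :: complex)"
    by (simp add: power2_eq_square algebra_simps)
  ultimately have "((\<lambda>t. of_real ((cmod (of_real x * szego_kernel a (cis t)
                                  + of_real y * szego_kernel b (cis t)))\<^sup>2) :: complex)
      has_integral of_real (2*pi * (x\<^sup>2/(1-a\<^sup>2) + y\<^sup>2/(1-b\<^sup>2) + 2*x*y/(1-a*b)))) {-pi..pi}"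
    by simp
  from has_integral_Re[OF this] show ?thesis by simp
qed

lemma has_integral_norm_square_szego_kernel:
  assumes "\<bar>a\<bar> < 1"
  shows "((\<lambda>t. (cmod (of_real x * szego_kernel a (cis t)))\<^sup>2) has_integral (2*pi * x\<^sup>2 / (1 - a\<^sup>2))) {-pi..pi}"
  using has_integral_norm_square_szego_kernels[OF assms assms, of x 0] by simp

lemma cis_minus_neq_0: "norm z < 1 \<Longrightarrow> cis t - z \<noteq> 0"
  by (metis eq_iff_diff_eq_0 less_irrefl norm_cis)

text \<open>Cauchy's formula at \<open>z\<close> and at \<open>0\<close>, combined.\<close>
lemma has_integral_Schwarz_kernel:
  fixes h :: "complex \<Rightarrow> complex"
  assumes hol: "h holomorphic_on cball 0 1" and z: "norm z < 1"
  shows "((\<lambda>t. (cis t + z) / (cis t - z) * h (cis t)) has_integral (2*pi * (2 * h z - h 0))) {0..2*pi}"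
proof -
  have "(\<lambda>w. 2 * h w) holomorphic_on cball 0 1"
    using hol by (intro holomorphic_intros)
  from has_integral_diff[OF has_integral_cis_Cauchy[OF this z] has_integral_cis_Cauchy[OF hol, of 0]]
  have "((\<lambda>t. (2 * h (cis t) / (cis t - z) * \<i> * cis t - h (cis t) / (cis t - 0) * \<i> * cis t) * (-\<i>))
          has_integral ((2*pi*\<i>*(2 * h z) - 2*pi*\<i>*h 0) * (-\<i>))) {0..2*pi}"
    by (intro has_integral_mult_left) simp
  moreover have "(2 * h (cis t) / (cis t - z) * \<i> * cis t - h (cis t) / (cis t - 0) * \<i> * cis t) * (-\<i>)
      = (cis t + z) / (cis t - z) * h (cis t)" for t
  proof -
    have "(2 * h (cis t) / (cis t - z) * \<i> * cis t - h (cis t) / (cis t - 0) * \<i> * cis t) * (-\<i>)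
        = 2 * h (cis t) * cis t / (cis t - z) - h (cis t)"
      by (simp add: divide_simps algebra_simps)
    also have "\<dots> = (cis t + z) / (cis t - z) * h (cis t)"
      using cis_minus_neq_0[OF z, of t] by (simp add: divide_simps) (simp add: algebra_simps)
    finally show ?thesis .
  qed
  moreover have "(2*pi*\<i>*(2 * h z) - 2*pi*\<i>*h 0) * (-\<i>) = 2*pi * (2 * h z - h 0)"
    by (simp add: algebra_simps)
  ultimately show ?thesis by simp
qed

lemma has_integral_Schwarz_kernel_cnj:
  fixes h :: "complex \<Rightarrow> complex"
  assumes hol: "h holomorphic_on cball 0 1" and z: "norm z < 1"
  shows "((\<lambda>t. (cis t + z) / (cis t - z) * cnj (h (cis t))) has_integral (2*pi * cnj (h 0))) {0..2*pi}"
proof -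
  define p where "p w = (1 + cnj z * w) / (1 - cnj z * w) * h w" for w
  have "p holomorphic_on cball 0 1"
    unfolding p_def using one_minus_mult_neq_0[of "cnj z"] z
    by (intro holomorphic_intros hol) auto
  from has_integral_mult_left[OF has_integral_cis_Cauchy[OF this, of 0], of "-\<i>"]
  have "((\<lambda>t. p (cis t)) has_integral (2*pi * h 0)) {0..2*pi}"
    by (simp add: p_def mult.assoc mult.left_commute[of \<i>])
  then have "((\<lambda>t. cnj (p (cis t))) has_integral (2*pi * cnj (h 0))) {0..2*pi}"
    using has_integral_cnj[of "\<lambda>t. p (cis t)" "2*pi * h 0"] by (simp add: o_def)
  moreover have "cnj (p (cis t)) = (cis t + z) / (cis t - z) * cnj (h (cis t))" for t
  proof -
    have "cnj (p (cis t)) = (1 + z * inverse (cis t)) / (1 - z * inverse (cis t)) * cnj (h (cis t))"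
      by (simp add: p_def cnj_cis_eq_inverse)
    also have "(1 + z * inverse (cis t)) / (1 - z * inverse (cis t)) = (cis t + z) / (cis t - z)"
      using cis_minus_neq_0[OF z, of t] by (simp add: divide_simps)
    finally show ?thesis .
  qed
  ultimately show ?thesis by simp
qed

lemma has_integral_Schwarz_formula:
  fixes h :: "complex \<Rightarrow> complex"
  assumes hol: "h holomorphic_on cball 0 1" and z: "norm z < 1"
  shows "((\<lambda>t. (cis t + z) / (cis t - z) * of_real (Re (h (cis t)))) has_integral
           (2*pi * (h z - \<i> * of_real (Im (h 0))))) {0..2*pi}"
proof -
  have "((\<lambda>t. ((cis t + z) / (cis t - z) * h (cis t) + (cis t + z) / (cis t - z) * cnj (h (cis t))) / 2)
          has_integral ((2*pi * (2 * h z - h 0) + 2*pi * cnj (h 0)) / 2)) {0..2*pi}"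
    by (intro has_integral_divide has_integral_add has_integral_Schwarz_kernel
        has_integral_Schwarz_kernel_cnj hol z)
  moreover have "(q * w + q * cnj w) / 2 = q * of_real (Re w)" for q w :: complex
    by (simp only: distrib_left[symmetric] complex_add_cnj) simp
  moreover have "(2*pi * (2 * h z - h 0) + 2*pi * cnj (h 0)) / 2 = 2*pi * (h z - \<i> * of_real (Im (h 0)))"
    by (simp add: complex_eq_iff field_simps)
  ultimately show ?thesis by (simp only:)
qed

lemma set_integrable_continuous_Icc:
  fixes h :: "real \<Rightarrow> 'b::euclidean_space"
  assumes "continuous_on {a..b} h"
  shows "set_integrable lborel {a..b} h"
  unfolding set_integrable_def by (rule borel_integrable_compact) (use assms in auto)

lemma set_integral_continuous_Icc:
  fixes h :: "real \<Rightarrow> 'b::euclidean_space"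
  assumes "continuous_on {a..b} h"
  shows "(LINT t:{a..b}|lborel. h t) = integral {a..b} h"
  by (rule set_borel_integral_eq_integral(2)[OF set_integrable_continuous_Icc[OF assms]])

lemma spectral_factor_eq_exp:
  fixes h :: "complex \<Rightarrow> complex"
  assumes hol: "h holomorphic_on cball 0 1" and real_at_0: "Im (h 0) = 0"
    and log_modulus: "\<And>t. ln (f (cis t)) = 2 * Re (h (cis t))" and z: "norm z < 1"
  shows "spectral_factor f z = exp (h z)"
proof -
  define k where "k t = (cis t + z) / (cis t - z) * of_real (Re (h (cis t)))" for t
  have "continuous_on {0..2*pi} (\<lambda>t. h (cis t))"
    by (rule continuous_on_compose2[OF holomorphic_on_imp_continuous_on[OF hol]])
      (auto intro!: continuous_intros)
  then have "continuous_on {0..2*pi} k"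
    unfolding k_def using cis_minus_neq_0[OF z] by (intro continuous_intros) auto
  then have "(LINT t:{0..2*pi}|lborel. k t) = 2*pi * h z"
    using has_integral_Schwarz_formula[OF hol z] real_at_0
    by (simp add: set_integral_continuous_Icc integral_unique k_def)
  moreover have "(LINT t:{0..2*pi}|lborel. (cis t + z) / (cis t - z) * of_real (ln (f (cis t))))
      = (LINT t:{0..2*pi}|lborel. 2 * k t)"
    by (simp add: k_def log_modulus mult.left_commute)
  ultimately show ?thesis
    unfolding spectral_factor_def by simp
qed

lemma boundary_value_eq_continuous_extension:
  assumes "\<And>z. norm z < 1 \<Longrightarrow> F z = G z" and "continuous_on (cball 0 1) G"
  shows "boundary_value F t = G (cis t)"
proof -
  have "continuous_on {0..1} (\<lambda>r::real. G (of_real r * cis t))"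
    by (rule continuous_on_compose2[OF assms(2)]) (auto intro!: continuous_intros simp: norm_mult)
  then have "((\<lambda>r::real. G (of_real r * cis t)) \<longlongrightarrow> G (of_real 1 * cis t)) (at 1 within {0..1})"
    unfolding continuous_on_def by (meson atLeastAtMost_iff order_refl zero_le_one)
  then have "((\<lambda>r::real. G (of_real r * cis t)) \<longlongrightarrow> G (cis t)) (at_left 1)"
    by (simp add: at_within_Icc_at_left)
  moreover have "eventually (\<lambda>r. F (of_real r * cis t) = G (of_real r * cis t)) (at_left (1::real))"
  proof -
    have "eventually (\<lambda>r. r \<in> {0<..<(1::real)}) (at_left 1)"
      by (rule eventually_at_left_real) simp
    then show ?thesis
      by eventually_elim (simp add: assms(1) norm_mult)
  qed
  ultimately have "((\<lambda>r::real. F (of_real r * cis t)) \<longlongrightarrow> G (cis t)) (at_left 1)"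
    using tendsto_cong by fastforce
  then show ?thesis
    unfolding boundary_value_def by (rule tendsto_Lim[OF trivial_limit_at_left_real])
qed

lemma continuous_on_compose_cis:
  assumes "continuous_on (cball 0 1) h"
  shows "continuous_on S (\<lambda>t. h (cis t))"
  by (rule continuous_on_compose2[OF assms]) (auto intro!: continuous_intros)

lemma L1_norm_eq_integral:
  assumes "continuous_on {-pi..pi} (\<lambda>t. h (cis t))"
  shows "L1_norm h = integral {-pi..pi} (\<lambda>t. \<bar>h (cis t)\<bar>)"
  unfolding L1_norm_def using assms by (intro set_integral_continuous_Icc continuous_intros)

lemma admissibleI_continuous:
  assumes "\<And>t. 0 < h (cis t)" and "continuous_on {-pi..pi} (\<lambda>t. h (cis t))"
  shows "admissible h"
proof -
  have "continuous_on {-pi..pi} (\<lambda>t. ln (h (cis t)))"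
    using assms by (intro continuous_intros) (auto simp: less_imp_neq[symmetric])
  then show ?thesis
    unfolding admissible_def L1_T_def
    using assms by (auto intro!: set_integrable_continuous_Icc less_imp_le)
qed

lemma ln_norm_exp_square: "ln ((cmod (exp w))\<^sup>2) = 2 * Re w"
  by (simp add: ln_realpow)

lemma norm_exp_minus_1_le:
  fixes z :: "'a::{banach,real_normed_field}"
  shows "norm (exp z - 1) \<le> norm z * exp (norm z)"
  using Taylor_exp_field[of z 0] by (simp add: mult.commute)

lemma two_mult_le_add_square_div:
  fixes d k :: real
  assumes "0 < d"
  shows "2 * k \<le> d + k\<^sup>2 / d"
proof -
  have "d + k\<^sup>2 / d - 2 * k = (k - d)\<^sup>2 / d"
    using assms by (simp add: field_simps power2_eq_square)
  moreover have "(k - d)\<^sup>2 / d \<ge> 0"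
    using assms by simp
  ultimately show ?thesis by linarith
qed

lemma norm_diff_square_ge:
  fixes x y :: "'a::real_normed_vector" and \<theta> :: real
  assumes "0 < \<theta>"
  shows "(1 - \<theta>) * (norm x)\<^sup>2 - (1/\<theta> - 1) * (norm y)\<^sup>2 \<le> (norm (x - y))\<^sup>2"
proof -
  have "(norm x - norm y)\<^sup>2 \<le> (norm (x - y))\<^sup>2"
    by (metis abs_ge_zero norm_triangle_ineq3 power2_abs power_mono)
  moreover have "(norm x - norm y)\<^sup>2 - ((1 - \<theta>) * (norm x)\<^sup>2 - (1/\<theta> - 1) * (norm y)\<^sup>2)
      = (\<theta> * norm x - norm y)\<^sup>2 / \<theta>"
    using assms by (simp add: field_simps power2_eq_square)
  moreover have "(\<theta> * norm x - norm y)\<^sup>2 / \<theta> \<ge> 0"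
    using assms by simp
  ultimately show ?thesis by linarith
qed

lemma integral_le_has_integral:
  fixes f g :: "real \<Rightarrow> real"
  assumes "continuous_on {a..b} f" "(g has_integral J) {a..b}" "\<And>t. t \<in> {a..b} \<Longrightarrow> f t \<le> g t"
  shows "integral {a..b} f \<le> J"
  using assms by (intro has_integral_le[OF integrable_integral[OF integrable_continuous_interval]])

lemma has_integral_le_integral:
  fixes f g :: "real \<Rightarrow> real"
  assumes "continuous_on {a..b} f" "(g has_integral J) {a..b}" "\<And>t. t \<in> {a..b} \<Longrightarrow> g t \<le> f t"
  shows "J \<le> integral {a..b} f"
  using assms by (intro has_integral_le[OF _ integrable_integral[OF integrable_continuous_interval]])

locale spectral_counterexample =
  fixes N :: real
  assumes N_ge_1: "1 \<le> N"
begin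

text \<open>\<open>\<delta>\<close> controls \<open>\<integral> |K|\<^sup>2 \<le> 2\<pi> \<delta>\<^sup>2\<close>, \<open>\<epsilon>\<close> controls \<open>\<integral> f |K - 1|\<^sup>2 \<le> \<epsilon>\<^sup>2\<close> (which needs
  \<open>1 - \<sigma> = \<alpha> \<ll> \<beta> = 1 - \<rho>\<close>), and \<open>\<parallel>f\<parallel>\<^sub>1 = 1 - \<eta>\<close> leaves room for \<open>\<parallel>g\<parallel>\<^sub>1 \<le> 1\<close>.\<close>
definition "\<delta> = 1 / (8 * pi\<^sup>2 * N)"
definition "\<beta> = \<delta>\<^sup>2"
definition "\<rho> = 1 - \<beta>"
definition "\<epsilon> = 1 / (16 * pi * exp (4*pi) * N)"
definition "\<alpha> = \<beta> * \<epsilon>\<^sup>2 / 12"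
definition "\<sigma> = 1 - \<alpha>"
definition "\<eta> = 1 / (4 * N)"
definition "amp = sqrt ((1 - \<eta>) * (1 - \<sigma>\<^sup>2) / (2*pi))"

lemma delta_bounds: "0 < \<delta>" "\<delta> < 1"
proof -
  have "9 < pi\<^sup>2"
    using power_strict_mono[of 3 pi 2] pi_gt3 by simp
  moreover have "8 * pi\<^sup>2 * 1 \<le> 8 * pi\<^sup>2 * N"
    using N_ge_1 by (intro mult_left_mono) auto
  ultimately have "1 < 8 * pi\<^sup>2 * N"
    by linarith
  then show "0 < \<delta>" "\<delta> < 1"
    unfolding \<delta>_def using N_ge_1 by (auto simp: divide_less_eq_1)
qed

lemma beta_bounds: "0 < \<beta>" "\<beta> < 1"
  unfolding \<beta>_def using delta_bounds by (auto simp: power_less_one_iff)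

lemma eps_bounds: "0 < \<epsilon>" "\<epsilon> < 1"
proof -
  have "16 * 3 * 1 * 1 \<le> 16 * pi * exp (4*pi) * N"
    using pi_gt3 N_ge_1 by (intro mult_mono) auto
  then have "1 < 16 * pi * exp (4*pi) * N"
    by linarith
  then show "0 < \<epsilon>" "\<epsilon> < 1"
    unfolding \<epsilon>_def using N_ge_1 by (auto simp: divide_less_eq_1)
qed

lemma alpha_bounds: "0 < \<alpha>" "\<alpha> \<le> \<beta> / 2"
proof -
  have "\<epsilon>\<^sup>2 \<le> 1"
    using eps_bounds by (simp add: power_le_one)
  then show "0 < \<alpha>" "\<alpha> \<le> \<beta> / 2"
    unfolding \<alpha>_def using beta_bounds eps_bounds mult_left_mono[of "\<epsilon>\<^sup>2" 1 \<beta>] by auto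
qed

lemma eta_bounds: "0 < \<eta>" "\<eta> \<le> 1/4"
  unfolding \<eta>_def using N_ge_1 by auto

lemma rho_sigma_bounds: "0 < \<rho>" "\<rho> < \<sigma>" "\<sigma> < 1"
  unfolding \<rho>_def \<sigma>_def using alpha_bounds beta_bounds by auto

lemma amp_square: "2*pi * amp\<^sup>2 = (1 - \<eta>) * (1 - \<sigma>\<^sup>2)" and amp_pos: "0 < amp"
proof -
  have "0 < (1 - \<eta>) * (1 - \<sigma>\<^sup>2) / (2*pi)"
    using eta_bounds rho_sigma_bounds by (simp add: power_less_one_iff)
  then show "2*pi * amp\<^sup>2 = (1 - \<eta>) * (1 - \<sigma>\<^sup>2)" "0 < amp"
    unfolding amp_def by auto
qed

definition F :: "complex \<Rightarrow> complex" where "F z = of_real amp * szego_kernel \<sigma> z"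
definition K :: "complex \<Rightarrow> complex" where "K z = of_real \<beta> * z * szego_kernel \<rho> z"
definition G :: "complex \<Rightarrow> complex" where "G z = F z * exp (\<i> * of_real pi * K z)"
definition f :: "complex \<Rightarrow> real" where "f z = (cmod (F z))\<^sup>2"
definition g :: "complex \<Rightarrow> real" where "g z = (cmod (G z))\<^sup>2"

lemma one_minus_sigma_neq_0: "norm (w::complex) \<le> 1 \<Longrightarrow> 1 - of_real \<sigma> * w \<noteq> 0"
  by (rule one_minus_mult_neq_0) (use rho_sigma_bounds in auto)

lemma one_minus_rho_neq_0: "norm (w::complex) \<le> 1 \<Longrightarrow> 1 - of_real \<rho> * w \<noteq> 0"
  by (rule one_minus_mult_neq_0) (use rho_sigma_bounds in auto)

lemma f_cis_pos: "0 < f (cis t)"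
  unfolding f_def F_def szego_kernel_def using one_minus_sigma_neq_0[of "cis t"] amp_pos by simp

lemma g_eq: "g z = f z * exp (-2*pi * Im (K z))"
proof -
  have "(cmod (exp (\<i> * of_real pi * K z)))\<^sup>2 = exp (-2*pi * Im (K z))"
    by (simp add: power2_eq_square exp_add[symmetric])
  then show ?thesis
    unfolding g_def f_def G_def by (simp add: norm_mult power_mult_distrib)
qed

lemma g_cis_pos: "0 < g (cis t)"
  unfolding g_eq using f_cis_pos by simp

lemma norm_K_cis_le_1: "cmod (K (cis t)) \<le> 1"
proof -
  have "1 - \<rho> \<le> cmod (1 - of_real \<rho> * cis t)"
    using norm_triangle_ineq2[of 1 "of_real \<rho> * cis t"] rho_sigma_bounds by (simp add: norm_mult)
  then show ?thesis
    unfolding K_def szego_kernel_def \<rho>_def using beta_bounds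
    by (simp add: norm_mult norm_divide divide_le_eq)
qed

lemma continuous_on_F: "continuous_on (cball 0 1) F"
  unfolding F_def szego_kernel_def by (intro continuous_intros) (use one_minus_sigma_neq_0 in auto)

lemma continuous_on_G: "continuous_on (cball 0 1) G"
  unfolding G_def F_def K_def szego_kernel_def
  by (intro continuous_intros) (use one_minus_sigma_neq_0 one_minus_rho_neq_0 in auto)

definition log_F :: "complex \<Rightarrow> complex" where
  "log_F z = of_real (ln amp) - Ln (1 - of_real \<sigma> * z)"

definition log_G :: "complex \<Rightarrow> complex" where
  "log_G z = log_F z + \<i> * of_real pi * K z"

lemma one_minus_sigma_notin_nonpos_Reals: "norm (w::complex) \<le> 1 \<Longrightarrow> 1 - of_real \<sigma> * w \<notin> \<real>\<^sub>\<le>\<^sub>0"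
proof -
  assume "norm w \<le> 1"
  then have "\<sigma> * Re w \<le> \<sigma> * 1"
    using complex_Re_le_cmod[of w] rho_sigma_bounds by (intro mult_left_mono) auto
  then have "0 < 1 - \<sigma> * Re w"
    using rho_sigma_bounds by linarith
  then have "0 < Re (1 - of_real \<sigma> * w)"
    by simp
  then show ?thesis
    by (simp add: complex_nonpos_Reals_iff)
qed

lemma log_F_holomorphic: "log_F holomorphic_on cball 0 1"
  unfolding log_F_def by (intro holomorphic_intros) (use one_minus_sigma_notin_nonpos_Reals in auto)

lemma log_G_holomorphic: "log_G holomorphic_on cball 0 1"
  unfolding log_G_def K_def szego_kernel_def
  by (intro holomorphic_intros log_F_holomorphic) (use one_minus_rho_neq_0 in auto)

lemma exp_log_F: "norm w \<le> 1 \<Longrightarrow> exp (log_F w) = F w"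
  unfolding log_F_def F_def szego_kernel_def
  using amp_pos one_minus_sigma_neq_0[of w] by (simp add: exp_diff exp_of_real)

lemma exp_log_G: "norm w \<le> 1 \<Longrightarrow> exp (log_G w) = G w"
  unfolding log_G_def G_def by (simp add: exp_add exp_log_F)

lemma spectral_factor_f:
  assumes "norm z < 1"
  shows "spectral_factor f z = F z"
proof -
  have "ln (f (cis t)) = 2 * Re (log_F (cis t))" for t
    using ln_norm_exp_square[of "log_F (cis t)"] exp_log_F[of "cis t"] by (simp add: f_def)
  moreover have "Im (log_F 0) = 0"
    by (simp add: log_F_def)
  ultimately show ?thesis
    using spectral_factor_eq_exp[OF log_F_holomorphic _ _ assms] exp_log_F assms by simp
qed

lemma spectral_factor_g:
  assumes "norm z < 1"
  shows "spectral_factor g z = G z"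
proof -
  have "ln (g (cis t)) = 2 * Re (log_G (cis t))" for t
    using ln_norm_exp_square[of "log_G (cis t)"] exp_log_G[of "cis t"] by (simp add: g_def)
  moreover have "Im (log_G 0) = 0"
    by (simp add: log_G_def log_F_def K_def)
  ultimately show ?thesis
    using spectral_factor_eq_exp[OF log_G_holomorphic _ _ assms] exp_log_G assms by simp
qed

lemma boundary_value_spectral_factors:
  "boundary_value (\<lambda>z. spectral_factor g z - spectral_factor f z) t = G (cis t) - F (cis t)"
  by (rule boundary_value_eq_continuous_extension)
    (simp_all add: spectral_factor_f spectral_factor_g continuous_on_diff continuous_on_F continuous_on_G)

lemma has_integral_f: "((\<lambda>t. f (cis t)) has_integral (1 - \<eta>)) {-pi..pi}"
proof -
  have "0 < 1 - \<sigma>\<^sup>2"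
    using rho_sigma_bounds by (simp add: power_less_one_iff)
  then have "2*pi * amp\<^sup>2 / (1 - \<sigma>\<^sup>2) = 1 - \<eta>"
    using amp_square by simp
  then show ?thesis
    using has_integral_norm_square_szego_kernel[of \<sigma> amp] rho_sigma_bounds by (simp add: f_def F_def)
qed

lemma has_integral_norm_K_square:
  "((\<lambda>t. (cmod (K (cis t)))\<^sup>2) has_integral (2*pi * \<beta>\<^sup>2 / (1 - \<rho>\<^sup>2))) {-pi..pi}"
  using has_integral_norm_square_szego_kernel[of \<rho> \<beta>] rho_sigma_bounds by (simp add: K_def norm_mult)

lemma K_energy_le: "2*pi * \<beta>\<^sup>2 / (1 - \<rho>\<^sup>2) \<le> 2*pi * \<delta>\<^sup>2"
proof -
  have "\<beta> \<le> 1 - \<rho>\<^sup>2"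
    using beta_bounds unfolding \<rho>_def by (simp add: power2_eq_square algebra_simps)
  then have "\<beta>\<^sup>2 / (1 - \<rho>\<^sup>2) \<le> \<beta>\<^sup>2 / \<beta>"
    using beta_bounds by (intro divide_left_mono) auto
  also have "\<beta>\<^sup>2 / \<beta> = \<delta>\<^sup>2"
    using beta_bounds unfolding \<beta>_def by (simp add: power2_eq_square)
  finally show ?thesis
    by (simp add: divide_simps)
qed

text \<open>The coefficients of the partial fraction decomposition of \<open>F (K - 1)\<close>.\<close>
definition "A = \<alpha> / (\<beta> - \<alpha>)"
definition "B = - \<beta> / (\<beta> - \<alpha>)"

lemma F_mult_K_minus_1:
  assumes "norm w \<le> 1"
  shows "F w * (K w - 1) = of_real (amp * A) * szego_kernel \<sigma> w + of_real (amp * B) * szego_kernel \<rho> w"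
proof -
  define X where "X = 1 - of_real \<sigma> * w"
  define Y where "Y = 1 - of_real \<rho> * w"
  define a :: complex where "a = of_real \<alpha>"
  define b :: complex where "b = of_real \<beta>"
  define c :: complex where "c = of_real amp"
  have "X \<noteq> 0" "Y \<noteq> 0" "b - a \<noteq> 0"
    unfolding X_def Y_def a_def b_def
    using one_minus_sigma_neq_0[OF assms] one_minus_rho_neq_0[OF assms] alpha_bounds beta_bounds
    by (auto simp flip: of_real_diff)
  have "a * Y - b * X = (b - a) * (w - 1)"
    unfolding X_def Y_def a_def b_def \<sigma>_def \<rho>_def by (simp add: algebra_simps)
  have "F w * (K w - 1) = c * (b * w - Y) / (X * Y)"
    unfolding F_def K_def szego_kernel_def X_def Y_def c_def b_def
    using \<open>X \<noteq> 0\<close> \<open>Y \<noteq> 0\<close> by (simp add: X_def Y_def field_simps)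
  also have "b * w - Y = w - 1"
    unfolding Y_def b_def \<rho>_def by (simp add: algebra_simps)
  also have "c * (w - 1) / (X * Y) = c * ((b - a) * (w - 1)) / ((b - a) * X * Y)"
    using \<open>b - a \<noteq> 0\<close> by simp
  also have "\<dots> = (c / (b - a)) * ((a * Y - b * X) / (X * Y))"
    unfolding \<open>a * Y - b * X = (b - a) * (w - 1)\<close> by (simp add: times_divide_times_eq mult.assoc)
  also have "(a * Y - b * X) / (X * Y) = a / X - b / Y"
    using \<open>X \<noteq> 0\<close> \<open>Y \<noteq> 0\<close> by (simp add: field_simps)
  also have "(c / (b - a)) * (a / X - b / Y) = c * (a / (b - a)) * (1 / X) + c * (- b / (b - a)) * (1 / Y)"
    by (simp add: divide_inverse algebra_simps)
  finally show ?thesis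
    unfolding A_def B_def szego_kernel_def X_def Y_def a_def b_def c_def by simp
qed

definition "mismatch = 2*pi * ((amp*A)\<^sup>2/(1-\<sigma>\<^sup>2) + (amp*B)\<^sup>2/(1-\<rho>\<^sup>2) + 2*(amp*A)*(amp*B)/(1-\<sigma>*\<rho>))"

lemma has_integral_f_norm_K_minus_1_square:
  "((\<lambda>t. f (cis t) * (cmod (K (cis t) - 1))\<^sup>2) has_integral mismatch) {-pi..pi}"
proof -
  have "f (cis t) * (cmod (K (cis t) - 1))\<^sup>2
      = (cmod (of_real (amp * A) * szego_kernel \<sigma> (cis t) + of_real (amp * B) * szego_kernel \<rho> (cis t)))\<^sup>2"
    for t
    unfolding f_def power_mult_distrib[symmetric] norm_mult[symmetric]
    by (simp add: F_mult_K_minus_1)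
  moreover have "((\<lambda>t. (cmod (of_real (amp * A) * szego_kernel \<sigma> (cis t)
                             + of_real (amp * B) * szego_kernel \<rho> (cis t)))\<^sup>2) has_integral mismatch) {-pi..pi}"
    unfolding mismatch_def by (rule has_integral_norm_square_szego_kernels) (use rho_sigma_bounds in auto)
  ultimately show ?thesis by simp
qed

lemma one_minus_sigma_square: "1 - \<sigma>\<^sup>2 = \<alpha> * (2 - \<alpha>)"
  unfolding \<sigma>_def by (simp add: power2_eq_square algebra_simps)

lemma one_minus_rho_square: "1 - \<rho>\<^sup>2 = \<beta> * (2 - \<beta>)"
  unfolding \<rho>_def by (simp add: power2_eq_square algebra_simps)

lemma two_pi_amp_square_le: "2*pi * amp\<^sup>2 \<le> 1 - \<sigma>\<^sup>2"
  unfolding amp_square using eta_bounds alpha_bounds beta_bounds one_minus_sigma_square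
  by (simp add: mult_le_cancel_right1)

lemma A_bounds: "0 \<le> A" "A\<^sup>2 \<le> 2 * \<alpha> / \<beta>"
proof -
  have "A \<le> \<alpha> / (\<beta> / 2)"
    unfolding A_def using alpha_bounds beta_bounds by (intro divide_left_mono) auto
  then have "A \<le> 2 * \<alpha> / \<beta>"
    by (simp add: mult.commute)
  moreover show "0 \<le> A"
    unfolding A_def using alpha_bounds by simp
  moreover have "2 * \<alpha> / \<beta> \<le> 1"
    using alpha_bounds beta_bounds by (simp add: divide_le_eq)
  ultimately have "A * A \<le> 2 * \<alpha> / \<beta> * 1"
    by (intro mult_mono) auto
  then show "A\<^sup>2 \<le> 2 * \<alpha> / \<beta>"
    by (simp add: power2_eq_square)
qed

lemma B_bounds: "B \<le> 0" "B\<^sup>2 \<le> 4"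
proof -
  have "\<beta> / (\<beta> - \<alpha>) \<le> \<beta> / (\<beta> / 2)"
    using alpha_bounds beta_bounds by (intro divide_left_mono) auto
  then have "(\<beta> / (\<beta> - \<alpha>))\<^sup>2 \<le> 2\<^sup>2"
    using alpha_bounds beta_bounds by (intro power_mono) auto
  then show "B\<^sup>2 \<le> 4"
    unfolding B_def by (simp add: power2_eq_square)
  show "B \<le> 0"
    unfolding B_def using alpha_bounds beta_bounds by simp
qed

lemma one_minus_sigma_square_div_le: "(1 - \<sigma>\<^sup>2) / (1 - \<rho>\<^sup>2) \<le> 2 * \<alpha> / \<beta>"
proof -
  have "(\<alpha> * (2 - \<alpha>)) / (\<beta> * (2 - \<beta>)) \<le> (\<alpha> * 2) / (\<beta> * 1)"
    using alpha_bounds beta_bounds by (intro frac_le mult_left_mono mult_mono) auto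
  then show ?thesis
    unfolding one_minus_sigma_square one_minus_rho_square by (simp add: mult.commute)
qed

lemma mismatch_le: "mismatch \<le> \<epsilon>\<^sup>2"
proof -
  have "\<sigma> * \<rho> < \<sigma> * 1"
    using rho_sigma_bounds by (intro mult_strict_left_mono) simp_all
  then have pos: "0 < 1 - \<sigma>\<^sup>2" "0 < 1 - \<rho>\<^sup>2" "0 < 1 - \<sigma> * \<rho>"
    using rho_sigma_bounds by (simp_all add: power_less_one_iff, linarith)
  have "2*pi * ((amp*A)\<^sup>2/(1-\<sigma>\<^sup>2)) = (2*pi * amp\<^sup>2) / (1-\<sigma>\<^sup>2) * A\<^sup>2"
    by (simp add: power_mult_distrib)
  also have "\<dots> \<le> 1 * A\<^sup>2"
    using two_pi_amp_square_le pos by (intro mult_right_mono) auto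
  finally have T1: "2*pi * ((amp*A)\<^sup>2/(1-\<sigma>\<^sup>2)) \<le> 2 * \<alpha> / \<beta>"
    using A_bounds by simp
  have "2*pi * ((amp*B)\<^sup>2/(1-\<rho>\<^sup>2)) = (2*pi * amp\<^sup>2) / (1-\<rho>\<^sup>2) * B\<^sup>2"
    by (simp add: power_mult_distrib)
  also have "\<dots> \<le> (1 - \<sigma>\<^sup>2) / (1 - \<rho>\<^sup>2) * B\<^sup>2"
    using two_pi_amp_square_le pos by (intro mult_right_mono divide_right_mono) auto
  also have "\<dots> \<le> 2 * \<alpha> / \<beta> * 4"
    using one_minus_sigma_square_div_le B_bounds pos alpha_bounds beta_bounds by (intro mult_mono) auto
  finally have T2: "2*pi * ((amp*B)\<^sup>2/(1-\<rho>\<^sup>2)) \<le> 2 * \<alpha> / \<beta> * 4" .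
  have "2*(amp*A)*(amp*B) = (2*amp*amp*A) * B"
    by simp
  also have "\<dots> \<le> 0"
    using A_bounds B_bounds by (intro mult_nonneg_nonpos) auto
  finally have "2*(amp*A)*(amp*B) \<le> 0" .
  then have T3: "2*pi * (2*(amp*A)*(amp*B)/(1-\<sigma>*\<rho>)) \<le> 0"
    using pos by (simp add: divide_nonpos_pos mult_nonneg_nonpos)
  have "mismatch \<le> 10 * (\<alpha> / \<beta>)"
    using T1 T2 T3 unfolding mismatch_def distrib_left by linarith
  also have "\<alpha> / \<beta> = \<epsilon>\<^sup>2 / 12"
    unfolding \<alpha>_def using beta_bounds by simp
  finally show ?thesis
    using zero_le_power2[of \<epsilon>] by linarith
qed

lemma continuous_on_f_cis: "continuous_on S (\<lambda>t. f (cis t))"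
  unfolding f_def by (intro continuous_intros continuous_on_compose_cis continuous_on_F)

lemma continuous_on_g_cis: "continuous_on S (\<lambda>t. g (cis t))"
  unfolding g_def by (intro continuous_intros continuous_on_compose_cis continuous_on_G)

lemma continuous_on_ln_f_cis: "continuous_on S (\<lambda>t. ln (f (cis t)))"
  using f_cis_pos by (intro continuous_intros continuous_on_f_cis) (auto simp: less_imp_neq[symmetric])

lemma continuous_on_ln_g_cis: "continuous_on S (\<lambda>t. ln (g (cis t)))"
  using g_cis_pos by (intro continuous_intros continuous_on_g_cis) (auto simp: less_imp_neq[symmetric])

lemma ln_g_minus_ln_f: "ln (g (cis t)) - ln (f (cis t)) = -2*pi * Im (K (cis t))"
  unfolding g_eq using f_cis_pos[of t] by (simp add: ln_mult)

lemma abs_ln_g_minus_ln_f_le: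
  "\<bar>ln (g (cis t)) - ln (f (cis t))\<bar> \<le> pi * \<delta> + pi / \<delta> * (cmod (K (cis t)))\<^sup>2"
proof -
  have "\<bar>ln (g (cis t)) - ln (f (cis t))\<bar> \<le> pi * (2 * cmod (K (cis t)))"
    unfolding ln_g_minus_ln_f using abs_Im_le_cmod[of "K (cis t)"] by (simp add: abs_mult)
  also have "\<dots> \<le> pi * (\<delta> + (cmod (K (cis t)))\<^sup>2 / \<delta>)"
    using delta_bounds by (intro mult_left_mono two_mult_le_add_square_div) auto
  finally show ?thesis
    by (simp add: algebra_simps)
qed

lemma abs_g_minus_f_le:
  "\<bar>g (cis t) - f (cis t)\<bar>
     \<le> pi * exp (4*pi) * (\<epsilon> * f (cis t) + 1/\<epsilon> * (f (cis t) * (cmod (K (cis t) - 1))\<^sup>2))"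
proof -
  define x where "x = -2*pi * Im (K (cis t))"
  define m where "m = cmod (K (cis t) - 1)"
  have "\<bar>x\<bar> \<le> 2*pi"
    unfolding x_def using abs_Im_le_cmod[of "K (cis t)"] norm_K_cis_le_1[of t] by (simp add: abs_mult)
  have "\<bar>x\<bar> \<le> 2*pi * m"
    unfolding x_def m_def using abs_Im_le_cmod[of "K (cis t) - 1"] by (simp add: abs_mult)
  have "\<bar>exp x - 1\<bar> \<le> \<bar>x\<bar> * exp \<bar>x\<bar>"
    using norm_exp_minus_1_le[of x] by simp
  also have "\<dots> \<le> (2*pi * m) * exp (4*pi)"
    using \<open>\<bar>x\<bar> \<le> 2*pi\<close> \<open>\<bar>x\<bar> \<le> 2*pi * m\<close> by (intro mult_mono) auto
  also have "\<dots> = pi * exp (4*pi) * (2 * m)"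
    by simp
  also have "\<dots> \<le> pi * exp (4*pi) * (\<epsilon> + m\<^sup>2 / \<epsilon>)"
    using eps_bounds by (intro mult_left_mono two_mult_le_add_square_div) auto
  finally have "f (cis t) * \<bar>exp x - 1\<bar> \<le> f (cis t) * (pi * exp (4*pi) * (\<epsilon> + m\<^sup>2 / \<epsilon>))"
    using f_cis_pos[of t] by (intro mult_left_mono) auto
  moreover have "\<bar>g (cis t) - f (cis t)\<bar> = f (cis t) * \<bar>exp x - 1\<bar>"
  proof -
    have "g (cis t) - f (cis t) = f (cis t) * (exp x - 1)"
      unfolding g_eq x_def by (simp add: algebra_simps)
    then show ?thesis
      using f_cis_pos[of t] by (simp add: abs_mult)
  qed
  ultimately show ?thesis
    unfolding m_def by (simp add: algebra_simps)
qed

text \<open>Where \<open>K \<approx> 1\<close>, the factor \<open>exp (i \<pi> K)\<close> is close to \<open>-1\<close>, so \<open>G \<approx> -F\<close>.\<close>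
lemma norm_G_plus_F_square_le:
  "(cmod (G (cis t) + F (cis t)))\<^sup>2 \<le> pi\<^sup>2 * exp (4*pi) * (f (cis t) * (cmod (K (cis t) - 1))\<^sup>2)"
proof -
  define w where "w = \<i> * of_real pi * (K (cis t) - 1)"
  define m where "m = cmod (K (cis t) - 1)"
  have "m \<le> 2"
    unfolding m_def using norm_triangle_ineq4[of "K (cis t)" 1] norm_K_cis_le_1[of t] by simp
  have "exp (\<i> * of_real pi * K (cis t)) = - exp w"
    unfolding w_def by (simp add: algebra_simps exp_diff)
  then have "G (cis t) + F (cis t) = - F (cis t) * (exp w - 1)"
    unfolding G_def by (simp add: algebra_simps)
  then have "(cmod (G (cis t) + F (cis t)))\<^sup>2 = f (cis t) * (cmod (exp w - 1))\<^sup>2"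
    unfolding f_def by (simp add: norm_mult power_mult_distrib)
  also have "\<dots> \<le> f (cis t) * (pi\<^sup>2 * exp (4*pi) * m\<^sup>2)"
  proof -
    have "cmod (exp w - 1) \<le> cmod w * exp (cmod w)"
      by (rule norm_exp_minus_1_le)
    also have "\<dots> \<le> (pi * m) * exp (2*pi)"
      using \<open>m \<le> 2\<close> unfolding w_def m_def by (intro mult_mono) (auto simp: norm_mult)
    finally have "(cmod (exp w - 1))\<^sup>2 \<le> ((pi * m) * exp (2*pi))\<^sup>2"
      by (intro power_mono) auto
    also have "((pi * m) * exp (2*pi))\<^sup>2 = pi\<^sup>2 * exp (4*pi) * m\<^sup>2"
      by (simp add: power_mult_distrib power2_eq_square mult_exp_exp)
    finally show ?thesis
      using f_cis_pos[of t] by (intro mult_left_mono) auto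
  qed
  finally show ?thesis
    unfolding m_def by (simp add: algebra_simps)
qed

lemma norm_G_minus_F_square_ge:
  "(1 - \<eta>) * (4 * f (cis t)) - (1/\<eta> - 1) * (cmod (G (cis t) + F (cis t)))\<^sup>2
     \<le> (cmod (G (cis t) - F (cis t)))\<^sup>2"
proof -
  have "(1 - \<eta>) * (cmod (2 * F (cis t)))\<^sup>2 - (1/\<eta> - 1) * (cmod (G (cis t) + F (cis t)))\<^sup>2
      \<le> (cmod (2 * F (cis t) - (G (cis t) + F (cis t))))\<^sup>2"
    by (rule norm_diff_square_ge) (use eta_bounds in auto)
  moreover have "cmod (2 * F (cis t) - (G (cis t) + F (cis t))) = cmod (G (cis t) - F (cis t))"
    by (simp add: norm_minus_commute algebra_simps)
  ultimately show ?thesis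
    by (simp add: f_def norm_mult power_mult_distrib)
qed

lemma L1_norm_ln_g_minus_ln_f_le: "L1_norm (\<lambda>z. ln (g z) - ln (f z)) \<le> 1 / (2*N)"
proof -
  have majorant: "((\<lambda>t. pi * \<delta> + pi / \<delta> * (cmod (K (cis t)))\<^sup>2) has_integral
          (2*pi * (pi * \<delta>) + pi / \<delta> * (2*pi * \<beta>\<^sup>2 / (1 - \<rho>\<^sup>2)))) {-pi..pi}"
    using has_integral_const_real[of "pi * \<delta>" "-pi" pi]
    by (intro has_integral_add has_integral_mult_right has_integral_norm_K_square) simp
  have "L1_norm (\<lambda>z. ln (g z) - ln (f z)) \<le> 2*pi * (pi * \<delta>) + pi / \<delta> * (2*pi * \<beta>\<^sup>2 / (1 - \<rho>\<^sup>2))"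
    unfolding L1_norm_eq_integral[OF continuous_on_diff[OF continuous_on_ln_g_cis continuous_on_ln_f_cis]]
    by (rule integral_le_has_integral[OF _ majorant])
      (intro continuous_intros continuous_on_ln_g_cis continuous_on_ln_f_cis, rule abs_ln_g_minus_ln_f_le)
  also have "\<dots> \<le> 2*pi * (pi * \<delta>) + pi / \<delta> * (2*pi * \<delta>\<^sup>2)"
    using K_energy_le delta_bounds by (intro add_left_mono mult_left_mono) auto
  also have "\<dots> = 4 * pi\<^sup>2 * \<delta>"
    using delta_bounds by (simp add: power2_eq_square)
  also have "\<dots> = 1 / (2*N)"
    unfolding \<delta>_def using N_ge_1 by simp
  finally show ?thesis .
qed

lemma integral_abs_g_minus_f_le: "integral {-pi..pi} (\<lambda>t. \<bar>g (cis t) - f (cis t)\<bar>) \<le> 1 / (8*N)"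
proof -
  have majorant: "((\<lambda>t. pi * exp (4*pi) * (\<epsilon> * f (cis t) + 1/\<epsilon> * (f (cis t) * (cmod (K (cis t) - 1))\<^sup>2)))
          has_integral pi * exp (4*pi) * (\<epsilon> * (1 - \<eta>) + 1/\<epsilon> * mismatch)) {-pi..pi}"
    by (intro has_integral_add has_integral_mult_right has_integral_f has_integral_f_norm_K_minus_1_square)
  have "integral {-pi..pi} (\<lambda>t. \<bar>g (cis t) - f (cis t)\<bar>)
      \<le> pi * exp (4*pi) * (\<epsilon> * (1 - \<eta>) + 1/\<epsilon> * mismatch)"
    by (rule integral_le_has_integral[OF _ majorant])
      (intro continuous_intros continuous_on_g_cis continuous_on_f_cis, rule abs_g_minus_f_le)
  also have "\<dots> \<le> pi * exp (4*pi) * (\<epsilon> * 1 + 1/\<epsilon> * \<epsilon>\<^sup>2)"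
    using mismatch_le eps_bounds eta_bounds by (intro mult_left_mono add_mono) auto
  also have "\<dots> = 1 / (8*N)"
    unfolding \<epsilon>_def using N_ge_1 by (simp add: power2_eq_square)
  finally show ?thesis .
qed

lemma integral_norm_G_plus_F_square_le:
  "integral {-pi..pi} (\<lambda>t. (cmod (G (cis t) + F (cis t)))\<^sup>2) \<le> 1 / (256 * N\<^sup>2)"
proof -
  have "integral {-pi..pi} (\<lambda>t. (cmod (G (cis t) + F (cis t)))\<^sup>2) \<le> pi\<^sup>2 * exp (4*pi) * mismatch"
    by (rule integral_le_has_integral[OF _ has_integral_mult_right[OF has_integral_f_norm_K_minus_1_square]])
      (intro continuous_intros continuous_on_compose_cis continuous_on_F continuous_on_G,
       rule norm_G_plus_F_square_le)
  also have "\<dots> \<le> pi\<^sup>2 * exp (4*pi) * \<epsilon>\<^sup>2"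
    using mismatch_le by (intro mult_left_mono) auto
  also have "\<dots> = 1 / (256 * exp (4*pi) * N\<^sup>2)"
    unfolding \<epsilon>_def using N_ge_1 by (simp add: power2_eq_square)
  also have "\<dots> \<le> 1 / (256 * N\<^sup>2)"
    using N_ge_1 by (intro divide_left_mono mult_right_mono) auto
  finally show ?thesis .
qed

lemma integral_norm_G_minus_F_square_ge:
  "(2 - 1/N)\<^sup>2 \<le> integral {-pi..pi} (\<lambda>t. (cmod (G (cis t) - F (cis t)))\<^sup>2)"
proof -
  define C where "C = integral {-pi..pi} (\<lambda>t. (cmod (G (cis t) + F (cis t)))\<^sup>2)"
  have cont: "continuous_on {-pi..pi} (\<lambda>t. (cmod (G (cis t) + F (cis t)))\<^sup>2)"
    by (intro continuous_intros continuous_on_compose_cis continuous_on_F continuous_on_G)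
  then have minorant: "((\<lambda>t. (1 - \<eta>) * (4 * f (cis t)) - (1/\<eta> - 1) * (cmod (G (cis t) + F (cis t)))\<^sup>2)
      has_integral ((1 - \<eta>) * (4 * (1 - \<eta>)) - (1/\<eta> - 1) * C)) {-pi..pi}"
    unfolding C_def
    by (intro has_integral_diff has_integral_mult_right has_integral_f integrable_integral
        integrable_continuous_interval)
  have "(1 - \<eta>) * (4 * (1 - \<eta>)) - (1/\<eta> - 1) * C
      \<le> integral {-pi..pi} (\<lambda>t. (cmod (G (cis t) - F (cis t)))\<^sup>2)"
    by (rule has_integral_le_integral[OF _ minorant])
      (intro continuous_intros continuous_on_compose_cis continuous_on_F continuous_on_G,
       rule norm_G_minus_F_square_ge)
  moreover have "(2 - 1/N)\<^sup>2 \<le> (1 - \<eta>) * (4 * (1 - \<eta>)) - (1/\<eta> - 1) * C"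
  proof -
    define u where "u = 1/N"
    have u: "0 < u" "u \<le> 1" "\<eta> = u/4"
      unfolding u_def \<eta>_def using N_ge_1 by auto
    have "0 \<le> C"
      unfolding C_def using cont by (intro integral_nonneg integrable_continuous_interval) auto
    moreover have "C \<le> u\<^sup>2 / 256"
      using integral_norm_G_plus_F_square_le unfolding C_def u_def by (simp add: power_one_over)
    ultimately have "(1/\<eta> - 1) * C \<le> (4/u) * (u\<^sup>2 / 256)"
      using u by (intro mult_mono) auto
    also have "\<dots> = u / 64"
      using u by (simp add: power2_eq_square)
    finally have "(1/\<eta> - 1) * C \<le> u / 64" .
    moreover have "u\<^sup>2 \<le> u"
      using u by (simp add: power2_eq_square mult_left_le)
    moreover have "(1 - \<eta>) * (4 * (1 - \<eta>)) = 4 - 2*u + u\<^sup>2/4" "(2 - 1/N)\<^sup>2 = 4 - 4*u + u\<^sup>2"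
      unfolding u(3) u_def[symmetric] by (simp_all add: power2_eq_square field_simps)
    ultimately show ?thesis
      using u by linarith
  qed
  ultimately show ?thesis
    by linarith
qed

lemma H2_norm_spectral_factors_ge:
  "2 - 1/N \<le> H2_norm (\<lambda>z. spectral_factor g z - spectral_factor f z)"
proof -
  have "H2_norm (\<lambda>z. spectral_factor g z - spectral_factor f z)
      = sqrt (integral {-pi..pi} (\<lambda>t. (cmod (G (cis t) - F (cis t)))\<^sup>2))"
    unfolding H2_norm_def boundary_value_spectral_factors
    by (subst set_integral_continuous_Icc)
      (intro continuous_intros continuous_on_compose_cis continuous_on_F continuous_on_G, rule refl)
  then show ?thesis
    using integral_norm_G_minus_F_square_ge real_le_rsqrt by simp
qed

lemma L1_norm_f: "L1_norm f = 1 - \<eta>"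
  using f_cis_pos has_integral_f
  by (simp add: L1_norm_eq_integral[OF continuous_on_f_cis] less_imp_le integral_unique)

lemma L1_norm_g_minus_f_le: "L1_norm (\<lambda>z. g z - f z) \<le> 1 / (8*N)"
  using integral_abs_g_minus_f_le
  by (simp add: L1_norm_eq_integral continuous_on_diff continuous_on_f_cis continuous_on_g_cis)

lemma L1_norm_g_le: "L1_norm g \<le> 1"
proof -
  have integrable: "(\<lambda>t. \<bar>g (cis t) - f (cis t)\<bar>) integrable_on {-pi..pi}"
    by (intro integrable_continuous_interval continuous_intros continuous_on_f_cis continuous_on_g_cis)
  have triangle: "\<bar>g (cis t)\<bar> \<le> f (cis t) + \<bar>g (cis t) - f (cis t)\<bar>" for t
    using f_cis_pos[of t] by arith
  have "L1_norm g = integral {-pi..pi} (\<lambda>t. \<bar>g (cis t)\<bar>)"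
    by (rule L1_norm_eq_integral[OF continuous_on_g_cis])
  also have "\<dots> \<le> (1 - \<eta>) + integral {-pi..pi} (\<lambda>t. \<bar>g (cis t) - f (cis t)\<bar>)"
    by (rule integral_le_has_integral[OF _ has_integral_add[OF has_integral_f
          integrable_integral[OF integrable]]])
      (intro continuous_intros continuous_on_g_cis, use triangle in blast)
  also have "\<dots> \<le> 1"
    using integral_abs_g_minus_f_le N_ge_1 unfolding \<eta>_def by (simp add: field_simps)
  finally show ?thesis .
qed

lemma counterexample_properties:
  "admissible f \<and> admissible g \<and> L1_norm f \<le> 1 \<and> L1_norm g \<le> 1 \<and>
   L1_norm (\<lambda>z. g z - f z) \<le> 1 / N \<and> L1_norm (\<lambda>z. ln (g z) - ln (f z)) \<le> 1 / N \<and>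
   2 - 1 / N \<le> H2_norm (\<lambda>z. spectral_factor g z - spectral_factor f z)"
proof -
  have "1 / (8*N) \<le> 1 / N" "1 / (2*N) \<le> 1 / N"
    using N_ge_1 by (simp_all add: divide_left_mono)
  moreover have "L1_norm f \<le> 1"
    using L1_norm_f eta_bounds by simp
  ultimately show ?thesis
    using admissibleI_continuous[OF f_cis_pos continuous_on_f_cis]
      admissibleI_continuous[OF g_cis_pos continuous_on_g_cis]
      L1_norm_g_le L1_norm_g_minus_f_le L1_norm_ln_g_minus_ln_f_le H2_norm_spectral_factors_ge
    by (intro conjI) linarith+
qed

end

theorem theorem1:
  shows "\<exists>f g :: nat \<Rightarrow> complex \<Rightarrow> real. \<forall>n::nat. n \<ge> 1 \<longrightarrow>
    admissible (f n) \<and> admissible (g n) \<and>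
    L1_norm (f n) \<le> 1 \<and> L1_norm (g n) \<le> 1 \<and>
    L1_norm (\<lambda>z. g n z - f n z) \<le> 1 / real n \<and>
    L1_norm (\<lambda>z. ln (g n z) - ln (f n z)) \<le> 1 / real n \<and>
    H2_norm (\<lambda>z. spectral_factor (g n) z - spectral_factor (f n) z) \<ge> 2 - 1 / real n"
proof -
  have "spectral_counterexample (real n)" if "1 \<le> n" for n :: nat
    using that by unfold_locales simp
  then show ?thesis
    by (intro exI[of _ "\<lambda>n. spectral_counterexample.f (real n)"]
        exI[of _ "\<lambda>n. spectral_counterexample.g (real n)"] allI impI
        spectral_counterexample.counterexample_properties)
qed

end
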